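(* If the starvation number of an SCS with $n$ robots is $s$, then the $s$-resilience of the system is $n-s$.
   Context: Let $T=\{C_1,\dots,C_n\}$ be pairwise disjoint unit circles in the plane (trajectories) and $\epsilon<0.5$ a communication range. The graph of potential links $G_\epsilon(T)$ has the circle centers as nodes and an edge $\{i,j\}$ whenever the centers of $C_i,C_j$ are at distance at most $2+\epsilon$; it is assumed connected. Points of a circle are identified with angles (modulo $2\pi$), and a robot traverses a circle in one time unit. A schedule is a pair $(f,g)$, $f:T\to[0,2\pi)$, $g:T\to\{-1,1\}$ ($1$ = counterclockwise); the robot on $C_i$ is at angle $f(C_i)+2\pi g(C_i)t$ at time $t$. A communication graph $G=(V,E)$ is a connected spanning subgraph of $G_\epsilon(T)$. The link position $\phi_{ij}$ is the point of $C_i$ closest to $C_j$. A schedule is $G$-synchronized if for every $\{i,j\}\in E$ the robot on $C_i$ is at $\phi_{ij}$ exactly when the robot on $C_j$ is at $\phi_{ji}$. An SCS with communication graph $G$ consists of $n$ robots, one per circle, moving under a $G$-synchronized schedule with $g(C_i)=-g(C_j)$ for all $\{i,j\}\in E$. Shifting protocol: when a robot on $C_i$ reaches $\phi_{ij}$ and there is no robot at $\phi_{ji}$, it moves to $C_j$ and thereafter follows the schedule of $C_j$. A partial SCS is obtained by removing some robots, the rest applying the shifting protocol. A surviving robot starves if every time it arrives at a link position the corresponding neighbor is absent. The $k$-resilience ($k\ge1$) is the minimum number of robots whose removal may cause at least $k$ surviving robots to starve ($\infty$ if impossible). The starvation number is the maximum possible number of starving robots in a partial SCS obtained from the SCS.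 *)

theory Defs
  imports "HOL-Analysis.Analysis" "HOL-Library.Extended_Nat"
begin

(* Circles C_0,...,C_{n-1}: unit circles with centres c i (complex plane).
   The point of C_i with angle a is  c i + cis a. *)

definition potential_edges :: "(nat \<Rightarrow> complex) \<Rightarrow> nat \<Rightarrow> real \<Rightarrow> nat set set" where
  "potential_edges c n eps = {{i,j} | i j. i < n \<and> j < n \<and> i \<noteq> j \<and> dist (c i) (c j) \<le> 2 + eps}"

definition graph_connected :: "nat \<Rightarrow> nat set set \<Rightarrow> bool" where
  "graph_connected n E \<longleftrightarrow>
     (\<forall>i<n. \<forall>j<n. (i, j) \<in> {(a, b). {a, b} \<in> E}\<^sup>*)"

definition at_link :: "(nat \<Rightarrow> complex) \<Rightarrow> nat \<Rightarrow> nat \<Rightarrow> real \<Rightarrow> bool" where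
  "at_link c i j a \<longleftrightarrow>
     (\<forall>\<theta>. infdist (c i + cis a) (sphere (c j) 1) \<le> infdist (c i + cis \<theta>) (sphere (c j) 1))"

definition sched :: "(nat \<Rightarrow> real) \<Rightarrow> (nat \<Rightarrow> int) \<Rightarrow> nat \<Rightarrow> real \<Rightarrow> real" where
  "sched f g i t = f i + 2 * pi * real_of_int (g i) * t"

definition synchronized ::
  "(nat \<Rightarrow> complex) \<Rightarrow> nat set set \<Rightarrow> (nat \<Rightarrow> real) \<Rightarrow> (nat \<Rightarrow> int) \<Rightarrow> bool" where
  "synchronized c E f g \<longleftrightarrow>
     (\<forall>i j. {i, j} \<in> E \<longrightarrow>
        (\<forall>t::real. at_link c i j (sched f g i t) \<longleftrightarrow> at_link c j i (sched f g j t)))"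

definition SCS ::
  "(nat \<Rightarrow> complex) \<Rightarrow> nat \<Rightarrow> real \<Rightarrow> nat set set \<Rightarrow> (nat \<Rightarrow> real) \<Rightarrow> (nat \<Rightarrow> int) \<Rightarrow> bool" where
  "SCS c n eps E f g \<longleftrightarrow>
     0 < eps \<and> eps < 1/2 \<and>
     (\<forall>i<n. \<forall>j<n. i \<noteq> j \<longrightarrow> sphere (c i) 1 \<inter> sphere (c j) 1 = {}) \<and>
     graph_connected n (potential_edges c n eps) \<and>
     E \<subseteq> potential_edges c n eps \<and> graph_connected n E \<and>
     (\<forall>i<n. 0 \<le> f i \<and> f i < 2 * pi \<and> (g i = 1 \<or> g i = -1)) \<and>
     synchronized c E f g \<and>
     (\<forall>i j. {i, j} \<in> E \<longrightarrow> g i = - g j)"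

definition before :: "(nat \<Rightarrow> real \<Rightarrow> nat) \<Rightarrow> nat \<Rightarrow> real \<Rightarrow> nat \<Rightarrow> bool" where
  "before pos r t p \<longleftrightarrow> (\<exists>\<delta>>0. \<forall>s. t - \<delta> < s \<and> s < t \<longrightarrow> pos r s = p)"

definition shift_cond ::
  "(nat \<Rightarrow> complex) \<Rightarrow> nat set set \<Rightarrow> (nat \<Rightarrow> real) \<Rightarrow> (nat \<Rightarrow> int) \<Rightarrow> nat set
     \<Rightarrow> (nat \<Rightarrow> nat) \<Rightarrow> real \<Rightarrow> nat \<Rightarrow> nat \<Rightarrow> bool" where
  "shift_cond c E f g S b t i j \<longleftrightarrow>
     {i, j} \<in> E \<and> at_link c i j (sched f g i t) \<and>
     \<not> (\<exists>r'\<in>S. b r' = j \<and> at_link c j i (sched f g j t))"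

(* pos r t = index of the circle robot r is on at time t (robot r starts on C_r);
   S = surviving robots.  pos is right-continuous, has left limits, equals r for t < 0,
   and at every time t >= 0 each robot applies the shifting protocol. *)
definition execution ::
  "(nat \<Rightarrow> complex) \<Rightarrow> nat set set \<Rightarrow> (nat \<Rightarrow> real) \<Rightarrow> (nat \<Rightarrow> int) \<Rightarrow> nat set
     \<Rightarrow> (nat \<Rightarrow> real \<Rightarrow> nat) \<Rightarrow> bool" where
  "execution c E f g S pos \<longleftrightarrow>
     (\<forall>r\<in>S. \<forall>t<0. pos r t = r) \<and>
     (\<forall>r\<in>S. \<forall>t. \<exists>\<delta>>0. \<forall>s. t \<le> s \<and> s < t + \<delta> \<longrightarrow> pos r s = pos r t) \<and>
     (\<forall>t\<ge>0. \<exists>b. (\<forall>r\<in>S. before pos r t (b r)) \<and>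
        (\<forall>r\<in>S. if (\<exists>j. shift_cond c E f g S b t (b r) j)
                 then shift_cond c E f g S b t (b r) (pos r t)
                 else pos r t = b r))"

definition starves ::
  "(nat \<Rightarrow> complex) \<Rightarrow> nat set set \<Rightarrow> (nat \<Rightarrow> real) \<Rightarrow> (nat \<Rightarrow> int) \<Rightarrow> nat set
     \<Rightarrow> (nat \<Rightarrow> real \<Rightarrow> nat) \<Rightarrow> nat \<Rightarrow> bool" where
  "starves c E f g S pos r \<longleftrightarrow>
     (\<forall>t\<ge>0. \<forall>i j. before pos r t i \<and> {i, j} \<in> E \<and> at_link c i j (sched f g i t) \<longrightarrow>
        \<not> (\<exists>r'\<in>S. before pos r' t j \<and> at_link c j i (sched f g j t)))"

definition starving_counts ::
  "(nat \<Rightarrow> complex) \<Rightarrow> nat \<Rightarrow> nat set set \<Rightarrow> (nat \<Rightarrow> real) \<Rightarrow> (nat \<Rightarrow> int) \<Rightarrow> nat set \<Rightarrow> nat set" where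
  "starving_counts c n E f g R =
     {card {r \<in> {..<n} - R. starves c E f g ({..<n} - R) pos r} | pos.
        execution c E f g ({..<n} - R) pos}"

definition starvation_number ::
  "(nat \<Rightarrow> complex) \<Rightarrow> nat \<Rightarrow> nat set set \<Rightarrow> (nat \<Rightarrow> real) \<Rightarrow> (nat \<Rightarrow> int) \<Rightarrow> nat" where
  "starvation_number c n E f g = Max (\<Union>R\<in>Pow {..<n}. starving_counts c n E f g R)"

definition resilience ::
  "(nat \<Rightarrow> complex) \<Rightarrow> nat \<Rightarrow> nat set set \<Rightarrow> (nat \<Rightarrow> real) \<Rightarrow> (nat \<Rightarrow> int) \<Rightarrow> nat \<Rightarrow> enat" where
  "resilience c n E f g k =
     Inf {enat (card R) | R. R \<subseteq> {..<n} \<and> (\<exists>m\<in>starving_counts c n E f g R. k \<le> m)}"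

end

theory Submission
  imports Defs
begin

text \<open>
  Removing all robots that do not starve leaves the starving ones starving, so \<open>n - s\<close>
  removals produce \<open>s\<close> starving robots. Conversely, suppose some removal leaves at least
  \<open>s\<close> starving robots and a surviving robot \<open>u\<close> that does not starve. Let a baton start
  with \<open>u\<close> and be handed over whenever its holder meets a partner at a pair of link
  positions; the holder then never starves. Keep only \<open>u\<close> and the starving robots and let
  \<open>u\<close> retrace the moves of the holder: since the holder's partner is gone, \<open>u\<close> shifts
  exactly where the holder handed over the baton, and a meeting of \<open>u\<close> with a starving
  robot would be a meeting of the holder with it. So \<open>s + 1\<close> robots starve, contradicting
  the maximality of \<open>s\<close>.
\<close>

section \<open>Geometry of disjoint unit circles\<close>

lemma dist_gt_2_if_disjoint_unit_spheres:
  fixes p q :: "'a::euclidean_space"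
  assumes "2 \<le> DIM('a)" and "sphere p 1 \<inter> sphere q 1 = {}"
  shows "dist p q > 2"
proof (rule ccontr)
  assume "\<not> dist p q > 2"
  obtain v :: 'a where v: "norm v = 1" "q - p = norm (q - p) *\<^sub>R v"
  proof (cases "q = p")
    case True
    obtain b :: 'a where "b \<in> Basis" using nonempty_Basis by blast
    then show ?thesis using True by (intro that[of b]) auto
  next
    case False
    then show ?thesis by (intro that[of "sgn (q - p)"]) (auto simp: norm_sgn sgn_div_norm)
  qed
  have "connected (dist q ` sphere p 1)"
    by (intro connected_continuous_image connected_sphere assms(1) continuous_intros)
  moreover have "dist q (p + v) \<in> dist q ` sphere p 1" "dist q (p - v) \<in> dist q ` sphere p 1"
    using v(1) by (auto simp: dist_norm)
  moreover have "q - (p + v) = (norm (q - p) - 1) *\<^sub>R v" "q - (p - v) = (norm (q - p) + 1) *\<^sub>R v"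
    by (simp_all add: algebra_simps flip: v(2))
  then have "dist q (p + v) \<le> 1" "1 \<le> dist q (p - v)"
    using v(1) \<open>\<not> dist p q > 2\<close> by (simp_all add: dist_norm norm_minus_commute abs_le_iff)
  ultimately have "1 \<in> dist q ` sphere p 1" using connectedD_interval by blast
  then show False using assms(2) by (auto simp: dist_commute)
qed

lemma unit_eq_sgn_if_norm_diff_le:
  fixes v w :: "'a::real_inner"
  assumes v: "norm v = 1" and le: "norm (w - v) \<le> norm w - 1"
  shows "v = sgn w"
proof -
  have sq: "(norm (x - y))\<^sup>2 = (norm x)\<^sup>2 - 2 * inner x y + (norm y)\<^sup>2" for x y :: 'a
    by (simp add: power2_norm_eq_inner inner_diff inner_commute)
  have "(norm (w - v))\<^sup>2 \<le> (norm w - 1)\<^sup>2"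
    using le by (intro power_mono) auto
  then have "norm w \<le> inner w v"
    unfolding sq v by (simp add: power2_eq_square algebra_simps)
  then have "(norm (w - norm w *\<^sub>R v))\<^sup>2 \<le> 0"
    unfolding sq using v by (simp add: power2_eq_square mult_left_mono)
  then have "sgn w = sgn (norm w *\<^sub>R v)" by simp
  also have "\<dots> = v"
  proof -
    have "norm w \<noteq> 0" using norm_ge_zero[of "w - v"] le by linarith
    then show ?thesis using v by (simp add: sgn_scaleR sgn_div_norm)
  qed
  finally show ?thesis by simp
qed

lemma infdist_sphere_ge:
  fixes x c :: "'a::metric_space"
  assumes "sphere c r \<noteq> {}"
  shows "dist x c - r \<le> infdist x (sphere c r)"
  unfolding infdist_notempty[OF assms]
proof (rule cINF_greatest[OF assms])
  fix a assume "a \<in> sphere c r"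
  then show "dist x c - r \<le> dist x a"
    using dist_triangle[of x c a] by (simp add: dist_commute)
qed

lemma at_link_eq_sgn:
  assumes "dist (c i) (c j) > 2" and "at_link c i j a"
  shows "cis a = sgn (c j - c i)"
proof (rule unit_eq_sgn_if_norm_diff_le)
  define w where "w = c j - c i"
  define \<theta> where "\<theta> = Arg w"
  have d: "norm w > 2" using assms(1) by (simp add: w_def dist_norm norm_minus_commute)
  have w: "w = of_real (norm w) * cis \<theta>"
    using rcis_cmod_Arg[of w] by (simp add: rcis_def \<theta>_def)
  have "infdist (c i + cis a) (sphere (c j) 1) \<le> infdist (c i + cis \<theta>) (sphere (c j) 1)"
    using assms(2) unfolding at_link_def by blast
  also have "\<dots> \<le> dist (c i + cis \<theta>) (c j - cis \<theta>)"
    by (intro infdist_le) (simp add: dist_norm)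
  also have "c i + cis \<theta> - (c j - cis \<theta>) = of_real (2 - norm w) * cis \<theta>"
    using w unfolding w_def by (simp add: algebra_simps)
  then have "dist (c i + cis \<theta>) (c j - cis \<theta>) = norm w - 2"
    using d by (simp only: dist_norm norm_mult norm_cis norm_of_real) simp
  finally have "infdist (c i + cis a) (sphere (c j) 1) \<le> norm w - 2" .
  moreover have "norm (w - cis a) - 1 \<le> infdist (c i + cis a) (sphere (c j) 1)"
    using infdist_sphere_ge[of "c j" 1 "c i + cis a"]
    by (simp add: w_def dist_norm norm_minus_commute algebra_simps)
  ultimately show "norm (c j - c i - cis a) \<le> norm (c j - c i) - 1"
    unfolding w_def by simp
qed simp

lemma SCS_centres_far:
  assumes "SCS c n eps E f g" "i < n" "j < n" "i \<noteq> j"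
  shows "dist (c i) (c j) > 2"
  using assms by (intro dist_gt_2_if_disjoint_unit_spheres) (auto simp: SCS_def)

lemma SCS_edgeD:
  assumes "SCS c n eps E f g" "{i, j} \<in> E"
  shows "i < n" "j < n" "i \<noteq> j" "dist (c i) (c j) \<le> 2 + eps" "dist (c i) (c j) > 2"
proof -
  have "{i, j} \<in> potential_edges c n eps" using assms unfolding SCS_def by blast
  then show "i < n" "j < n" "i \<noteq> j" and le: "dist (c i) (c j) \<le> 2 + eps"
    unfolding potential_edges_def by (auto simp: doubleton_eq_iff dist_commute)
  then show "dist (c i) (c j) > 2" using SCS_centres_far[OF assms(1)] by blast
qed

text \<open>Since \<open>eps < 1/2\<close>, two neighbours of \<open>C\<^sub>i\<close> in the same direction would have centres
  closer than 2.\<close>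
lemma SCS_at_link_unique:
  assumes scs: "SCS c n eps E f g" and "{i, j} \<in> E" "{i, k} \<in> E"
    and "at_link c i j a" "at_link c i k a"
  shows "j = k"
proof (rule ccontr)
  assume "j \<noteq> k"
  define v where "v = cis a"
  have v: "c l - c i = of_real (dist (c i) (c l)) * v" if "{i, l} \<in> E" "at_link c i l a" for l
  proof -
    have "v = sgn (c l - c i)"
      using that SCS_edgeD[OF scs that(1)] unfolding v_def by (intro at_link_eq_sgn) auto
    moreover have "c l \<noteq> c i" using SCS_edgeD[OF scs that(1)] by auto
    ultimately show ?thesis by (simp add: sgn_eq dist_norm norm_minus_commute)
  qed
  have "c j - c k = (c j - c i) - (c k - c i)" by simp
  also have "\<dots> = of_real (dist (c i) (c j) - dist (c i) (c k)) * v"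
    unfolding v[OF assms(2,4)] v[OF assms(3,5)] by (simp add: algebra_simps)
  finally have "dist (c j) (c k) = \<bar>dist (c i) (c j) - dist (c i) (c k)\<bar>"
    by (simp only: dist_norm norm_mult norm_of_real v_def norm_cis) simp
  also have "\<dots> < 2"
    using SCS_edgeD[OF scs assms(2)] SCS_edgeD[OF scs assms(3)] scs unfolding SCS_def by linarith
  finally show False
    using SCS_centres_far[OF scs] SCS_edgeD[OF scs assms(2)] SCS_edgeD[OF scs assms(3)] \<open>j \<noteq> k\<close>
    by fastforce
qed

lemma SCS_link_times_diff_int:
  assumes scs: "SCS c n eps E f g" and "{i, j} \<in> E"
    and "at_link c i j (sched f g i t)" "at_link c i j (sched f g i t')"
  shows "t - t' \<in> \<int>"
proof -
  have "cis (sched f g i t) = cis (sched f g i t')"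
    using assms(3,4) SCS_edgeD[OF assms(1,2)] by (simp add: at_link_eq_sgn)
  then obtain m :: int where "sched f g i t = sched f g i t' + 2 * pi * m"
    using sin_cos_eq_iff by (metis cis.sel)
  then have "2 * pi * (real_of_int (g i) * (t - t')) = 2 * pi * m"
    unfolding sched_def by (simp add: algebra_simps)
  then have "real_of_int (g i) * (t - t') = m" by simp
  moreover have "g i = 1 \<or> g i = -1"
    using scs SCS_edgeD[OF assms(1,2)] unfolding SCS_def by blast
  ultimately show ?thesis by (metis Ints_minus Ints_of_int minus_diff_eq mult_1 mult_minus1 of_int_1 of_int_minus)
qed

section \<open>Locally finite event sets\<close>

definition locally_finite :: "real set \<Rightarrow> bool" where
  "locally_finite A \<longleftrightarrow> (\<forall>a b. finite (A \<inter> {a..b}))"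

lemma locally_finite_isolated:
  assumes "locally_finite A"
  obtains \<delta> where "\<delta> > 0" "\<And>x. x \<in> A \<Longrightarrow> x \<noteq> t \<Longrightarrow> \<delta> \<le> \<bar>x - t\<bar>"
proof -
  obtain d where d: "d > 0" "\<forall>x\<in>A \<inter> {t-1..t+1}. x \<noteq> t \<longrightarrow> d \<le> dist t x"
    using assms finite_set_avoid[of "A \<inter> {t-1..t+1}" t] unfolding locally_finite_def by blast
  show ?thesis
  proof (rule that[of "min d 1"])
    fix x assume "x \<in> A" "x \<noteq> t"
    then show "min d 1 \<le> \<bar>x - t\<bar>"
      using d(2) by (cases "x \<in> {t-1..t+1}") (auto simp: dist_real_def)
  qed (use d in simp)
qed

lemma locally_finite_finite:
  assumes "locally_finite A"
  shows "finite (A \<inter> {a..b})" "finite (A \<inter> {a..<b})"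
proof -
  show "finite (A \<inter> {a..b})" using assms unfolding locally_finite_def by blast
  then show "finite (A \<inter> {a..<b})" by (rule finite_subset[rotated]) auto
qed

lemma locally_finite_right_const:
  assumes "locally_finite A"
  shows "\<exists>\<delta>>0. \<forall>s. t \<le> s \<and> s < t + \<delta> \<longrightarrow> A \<inter> {a..s} = A \<inter> {a..t}"
proof -
  obtain d where d: "d > 0" "\<And>x. x \<in> A \<Longrightarrow> x \<noteq> t \<Longrightarrow> d \<le> \<bar>x - t\<bar>"
    using locally_finite_isolated[OF assms] by blast
  have "A \<inter> {a..s} = A \<inter> {a..t}" if "t \<le> s" "s < t + d" for s
  proof -
    have "x \<le> t" if "x \<in> A" "x \<le> s" for x
      using d(2)[OF \<open>x \<in> A\<close>] that \<open>s < t + d\<close> by (cases "x = t") auto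
    then show ?thesis using \<open>t \<le> s\<close> by auto
  qed
  then show ?thesis using d(1) by blast
qed

lemma locally_finite_left_const:
  assumes "locally_finite A"
  shows "\<exists>\<delta>>0. \<forall>s. t - \<delta> < s \<and> s < t \<longrightarrow> A \<inter> {a..s} = A \<inter> {a..<t}"
proof -
  obtain d where d: "d > 0" "\<And>x. x \<in> A \<Longrightarrow> x \<noteq> t \<Longrightarrow> d \<le> \<bar>x - t\<bar>"
    using locally_finite_isolated[OF assms] by blast
  have "A \<inter> {a..s} = A \<inter> {a..<t}" if "t - d < s" "s < t" for s
  proof -
    have "x \<le> s" if "x \<in> A" "x < t" for x
      using d(2)[OF \<open>x \<in> A\<close>] that \<open>t - d < s\<close> by auto
    then show ?thesis using \<open>s < t\<close> by auto
  qed
  then show ?thesis using d(1) by blast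
qed

definition run_upto :: "('a \<Rightarrow> real \<Rightarrow> 'a) \<Rightarrow> 'a \<Rightarrow> real set \<Rightarrow> real \<Rightarrow> 'a" where
  "run_upto step x A t = foldl step x (sorted_list_of_set (A \<inter> {0..t}))"

definition run_before :: "('a \<Rightarrow> real \<Rightarrow> 'a) \<Rightarrow> 'a \<Rightarrow> real set \<Rightarrow> real \<Rightarrow> 'a" where
  "run_before step x A t = foldl step x (sorted_list_of_set (A \<inter> {0..<t}))"

lemma run_upto_neg: "t < 0 \<Longrightarrow> run_upto step x A t = x"
  unfolding run_upto_def by simp

lemma run_upto_not_event: "t \<notin> A \<Longrightarrow> run_upto step x A t = run_before step x A t"
proof -
  assume "t \<notin> A"
  then have "A \<inter> {0..t} = A \<inter> {0..<t}" by (auto simp: order_le_less)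
  then show ?thesis unfolding run_upto_def run_before_def by simp
qed

lemma run_upto_event:
  assumes "locally_finite A" "t \<in> A" "t \<ge> 0"
  shows "run_upto step x A t = step (run_before step x A t) t"
proof -
  have fin: "finite (A \<inter> {0..<t})" using locally_finite_finite[OF assms(1)] by blast
  have "sorted_list_of_set (A \<inter> {0..t}) = sorted_list_of_set (A \<inter> {0..<t}) @ [t]"
  proof (rule sorted_distinct_set_unique)
    show "sorted (sorted_list_of_set (A \<inter> {0..<t}) @ [t])"
      using fin by (auto simp: sorted_append less_imp_le)
    show "distinct (sorted_list_of_set (A \<inter> {0..<t}) @ [t])"
      using fin by simp
    show "set (sorted_list_of_set (A \<inter> {0..t})) = set (sorted_list_of_set (A \<inter> {0..<t}) @ [t])"
      using fin locally_finite_finite[OF assms(1)] assms(2,3) by auto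
  qed simp_all
  then show ?thesis unfolding run_upto_def run_before_def by simp
qed

lemma run_upto_right_const:
  assumes "locally_finite A"
  shows "\<exists>\<delta>>0. \<forall>s. t \<le> s \<and> s < t + \<delta> \<longrightarrow> run_upto step x A s = run_upto step x A t"
proof -
  obtain d where "d > 0" and d: "\<forall>s. t \<le> s \<and> s < t + d \<longrightarrow> A \<inter> {0..s} = A \<inter> {0..t}"
    using locally_finite_right_const[OF assms] by blast
  have "run_upto step x A s = run_upto step x A t" if "t \<le> s \<and> s < t + d" for s
  proof -
    have "A \<inter> {0..s} = A \<inter> {0..t}" using d that by blast
    then show ?thesis unfolding run_upto_def by (simp only:)
  qed
  with \<open>d > 0\<close> show ?thesis by blast
qed

lemma run_upto_left_lim:
  assumes "locally_finite A"
  shows "\<exists>\<delta>>0. \<forall>s. t - \<delta> < s \<and> s < t \<longrightarrow> run_upto step x A s = run_before step x A t"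
proof -
  obtain d where "d > 0" and d: "\<forall>s. t - d < s \<and> s < t \<longrightarrow> A \<inter> {0..s} = A \<inter> {0..<t}"
    using locally_finite_left_const[OF assms] by blast
  have "run_upto step x A s = run_before step x A t" if "t - d < s \<and> s < t" for s
  proof -
    have "A \<inter> {0..s} = A \<inter> {0..<t}" using d that by blast
    then show ?thesis unfolding run_upto_def run_before_def by (simp only:)
  qed
  with \<open>d > 0\<close> show ?thesis by blast
qed

lemma foldl_invariant:
  "P x \<Longrightarrow> (\<And>y \<tau>. P y \<Longrightarrow> \<tau> \<in> set xs \<Longrightarrow> P (step y \<tau>)) \<Longrightarrow> P (foldl step x xs)"
  by (induction xs arbitrary: x) auto

lemma run_invariant:
  assumes "locally_finite A" "P x" "\<And>y \<tau>. P y \<Longrightarrow> \<tau> \<ge> 0 \<Longrightarrow> P (step y \<tau>)"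
  shows "P (run_upto step x A t)" "P (run_before step x A t)"
  unfolding run_upto_def run_before_def
  using locally_finite_finite[OF assms(1)] assms(2,3)
  by (auto intro: foldl_invariant[where P = P])

section \<open>Executions and meetings\<close>

definition protocol_step ::
  "(nat \<Rightarrow> complex) \<Rightarrow> nat set set \<Rightarrow> (nat \<Rightarrow> real) \<Rightarrow> (nat \<Rightarrow> int) \<Rightarrow> nat set
     \<Rightarrow> (nat \<Rightarrow> nat) \<Rightarrow> real \<Rightarrow> nat \<Rightarrow> nat \<Rightarrow> bool" where
  "protocol_step c E f g S b t i p \<longleftrightarrow>
     (if \<exists>j. shift_cond c E f g S b t i j then shift_cond c E f g S b t i p else p = i)"

lemma execution_iff:
  "execution c E f g S pos \<longleftrightarrow>
     (\<forall>r\<in>S. \<forall>t<0. pos r t = r) \<and>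
     (\<forall>r\<in>S. \<forall>t. \<exists>\<delta>>0. \<forall>s. t \<le> s \<and> s < t + \<delta> \<longrightarrow> pos r s = pos r t) \<and>
     (\<forall>t\<ge>0. \<exists>b. (\<forall>r\<in>S. before pos r t (b r)) \<and>
        (\<forall>r\<in>S. protocol_step c E f g S b t (b r) (pos r t)))"
  unfolding execution_def protocol_step_def ..

definition meets ::
  "(nat \<Rightarrow> complex) \<Rightarrow> nat set set \<Rightarrow> (nat \<Rightarrow> real) \<Rightarrow> (nat \<Rightarrow> int) \<Rightarrow> nat set
     \<Rightarrow> (nat \<Rightarrow> real \<Rightarrow> nat) \<Rightarrow> nat \<Rightarrow> real \<Rightarrow> nat \<Rightarrow> bool" where
  "meets c E f g S pos w t w' \<longleftrightarrow> w' \<in> S \<and>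
     (\<exists>i j. before pos w t i \<and> before pos w' t j \<and> {i, j} \<in> E \<and>
        at_link c i j (sched f g i t) \<and> at_link c j i (sched f g j t))"

lemma starves_iff_no_meets:
  "starves c E f g S pos r \<longleftrightarrow> (\<forall>t\<ge>0. \<forall>w. \<not> meets c E f g S pos r t w)"
  unfolding starves_def meets_def by blast

lemma meets_sym:
  "meets c E f g S pos w t w' \<Longrightarrow> w \<in> S \<Longrightarrow> meets c E f g S pos w' t w"
  unfolding meets_def by (metis insert_commute)

lemma meets_mono: "meets c E f g S pos w t w' \<Longrightarrow> S \<subseteq> S' \<Longrightarrow> meets c E f g S' pos w t w'"
  unfolding meets_def by blast

lemma before_unique: "before pos r t p \<Longrightarrow> before pos r t q \<Longrightarrow> p = q"
proof -
  assume "before pos r t p" "before pos r t q"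
  then obtain d1 d2 where "d1 > 0" "\<forall>s. t - d1 < s \<and> s < t \<longrightarrow> pos r s = p"
    and "d2 > 0" "\<forall>s. t - d2 < s \<and> s < t \<longrightarrow> pos r s = q"
    unfolding before_def by blast
  moreover have "t - d1 < t - min d1 d2 / 2" "t - d2 < t - min d1 d2 / 2" "t - min d1 d2 / 2 < t"
    using \<open>d1 > 0\<close> \<open>d2 > 0\<close> by (auto simp: min_def)
  ultimately show "p = q" by metis
qed

lemma before_cong:
  assumes "\<exists>\<delta>>0. \<forall>s. t - \<delta> < s \<and> s < t \<longrightarrow> pos r s = pos' r' s"
  shows "before pos r t p \<longleftrightarrow> before pos' r' t p"
proof -
  obtain d where d: "d > 0" "\<forall>s. t - d < s \<and> s < t \<longrightarrow> pos r s = pos' r' s"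
    using assms by blast
  have shrink: "\<exists>\<delta>>0. \<forall>s. t - \<delta> < s \<and> s < t \<longrightarrow> P s \<and> pos r s = pos' r' s"
    if ev: "\<exists>\<delta>>0. \<forall>s. t - \<delta> < s \<and> s < t \<longrightarrow> P s" for P
  proof -
    obtain e where "e > 0" "\<forall>s. t - e < s \<and> s < t \<longrightarrow> P s" using ev by blast
    then show ?thesis using d by (intro exI[of _ "min d e"]) auto
  qed
  show ?thesis
  proof
    assume "before pos r t p"
    then obtain e where "e > 0" "\<forall>s. t - e < s \<and> s < t \<longrightarrow> pos r s = p \<and> pos r s = pos' r' s"
      using shrink[of "\<lambda>s. pos r s = p"] unfolding before_def by blast
    then show "before pos' r' t p" unfolding before_def by (intro exI[of _ e]) auto
  next
    assume "before pos' r' t p"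
    then obtain e where "e > 0" "\<forall>s. t - e < s \<and> s < t \<longrightarrow> pos' r' s = p \<and> pos r s = pos' r' s"
      using shrink[of "\<lambda>s. pos' r' s = p"] unfolding before_def by blast
    then show "before pos r t p" unfolding before_def by (intro exI[of _ e]) auto
  qed
qed

lemma meets_irrefl:
  assumes "SCS c n eps E f g" "meets c E f g S pos w t w"
  shows False
proof -
  obtain i j where "before pos w t i" "before pos w t j" "{i, j} \<in> E"
    using assms(2) unfolding meets_def by blast
  then show False using before_unique SCS_edgeD(3)[OF assms(1)] by metis
qed

lemma protocol_step_iff_if_no_meets:
  assumes b: "\<forall>r\<in>S. before pos r t (b r)" and "w \<in> S"
    and no_meets: "\<forall>w'. \<not> meets c E f g S pos w t w'"
    and occupied: "b' ` S' \<subseteq> b ` S"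
  shows "protocol_step c E f g S' b' t (b w) p \<longleftrightarrow> protocol_step c E f g S b t (b w) p"
proof -
  have "shift_cond c E f g S' b' t (b w) k \<longleftrightarrow> shift_cond c E f g S b t (b w) k" for k
  proof
    assume sc: "shift_cond c E f g S' b' t (b w) k"
    have "\<not> (b r = k \<and> at_link c k (b w) (sched f g k t))" if "r \<in> S" for r
    proof
      assume "b r = k \<and> at_link c k (b w) (sched f g k t)"
      moreover have "before pos w t (b w)" "before pos r t (b r)"
        using b \<open>r \<in> S\<close> \<open>w \<in> S\<close> by auto
      ultimately have "meets c E f g S pos w t r"
        using sc \<open>r \<in> S\<close> unfolding meets_def shift_cond_def by auto
      then show False using no_meets by blast
    qed
    then show "shift_cond c E f g S b t (b w) k"
      using sc unfolding shift_cond_def by blast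
  next
    assume sc: "shift_cond c E f g S b t (b w) k"
    have "\<not> (b' r' = k \<and> at_link c k (b w) (sched f g k t))" if "r' \<in> S'" for r'
    proof -
      obtain r where "r \<in> S" "b' r' = b r" using occupied \<open>r' \<in> S'\<close> by blast
      then show ?thesis using sc unfolding shift_cond_def by auto
    qed
    then show "shift_cond c E f g S' b' t (b w) k"
      using sc unfolding shift_cond_def by blast
  qed
  then have "shift_cond c E f g S' b' t (b w) = shift_cond c E f g S b t (b w)" by blast
  then show ?thesis unfolding protocol_step_def by (simp only:)
qed

lemma execution_restrict_starving:
  assumes ex: "execution c E f g S pos" and "X \<subseteq> S"
    and starving: "\<forall>r\<in>X. starves c E f g S pos r"
  shows "execution c E f g X pos" "\<forall>r\<in>X. starves c E f g X pos r"
proof -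
  show "\<forall>r\<in>X. starves c E f g X pos r"
    using starving \<open>X \<subseteq> S\<close> meets_mono unfolding starves_iff_no_meets by blast
  have "\<exists>b. (\<forall>r\<in>X. before pos r t (b r)) \<and> (\<forall>r\<in>X. protocol_step c E f g X b t (b r) (pos r t))"
    if "t \<ge> 0" for t
  proof -
    obtain b where b: "\<forall>r\<in>S. before pos r t (b r)"
      and step: "\<forall>r\<in>S. protocol_step c E f g S b t (b r) (pos r t)"
      using ex \<open>t \<ge> 0\<close> unfolding execution_iff by blast
    have "protocol_step c E f g X b t (b r) (pos r t)" if "r \<in> X" for r
      using protocol_step_iff_if_no_meets[OF b, where w=r and S'=X and b'=b]
        step starving that \<open>X \<subseteq> S\<close> \<open>t \<ge> 0\<close>
      unfolding starves_iff_no_meets by blast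
    then show ?thesis using b \<open>X \<subseteq> S\<close> by blast
  qed
  then show "execution c E f g X pos"
    using ex \<open>X \<subseteq> S\<close> unfolding execution_iff by blast
qed

section \<open>Passing a baton\<close>

definition link_times :: "(nat \<Rightarrow> complex) \<Rightarrow> nat set set \<Rightarrow> (nat \<Rightarrow> real) \<Rightarrow> (nat \<Rightarrow> int) \<Rightarrow> real set" where
  "link_times c E f g = {t. \<exists>i j. {i, j} \<in> E \<and> at_link c i j (sched f g i t)}"

lemma meets_link_time: "meets c E f g S pos w t w' \<Longrightarrow> t \<in> link_times c E f g"
  unfolding meets_def link_times_def by blast

lemma SCS_locally_finite_link_times:
  assumes scs: "SCS c n eps E f g"
  shows "locally_finite (link_times c E f g)"
  unfolding locally_finite_def
proof (intro allI)
  fix a b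
  define A where "A = (\<lambda>(i, j). {t \<in> {a..b}. {i, j} \<in> E \<and> at_link c i j (sched f g i t)})"
  have "finite (A p)" for p
  proof -
    have "inj_on floor (A p)"
    proof (rule inj_onI)
      fix x y assume "x \<in> A p" "y \<in> A p" "floor x = floor y"
      then have "x - y \<in> \<int>" "\<bar>x - y\<bar> < 1"
        using SCS_link_times_diff_int[OF scs] unfolding A_def by (auto split: prod.splits) linarith+
      then show "x = y" using Ints_nonzero_abs_less1 by fastforce
    qed
    moreover have "floor ` A p \<subseteq> {floor a..floor b}"
      unfolding A_def by (auto split: prod.splits intro: floor_mono)
    ultimately show ?thesis using finite_imageD finite_subset by blast
  qed
  moreover have "link_times c E f g \<inter> {a..b} \<subseteq> (\<Union>p\<in>{..<n} \<times> {..<n}. A p)"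
    using SCS_edgeD(1,2)[OF scs] unfolding link_times_def A_def by fastforce
  ultimately show "finite (link_times c E f g \<inter> {a..b})"
    by (meson finite_SigmaI finite_UN_I finite_lessThan finite_subset)
qed

text \<open>At a meeting the partner \<open>w'\<close> stays on its circle: by \<open>SCS_at_link_unique\<close> its only
  link position at that time leads to the circle occupied by \<open>w\<close>.\<close>
lemma meets_partner_stays:
  assumes scs: "SCS c n eps E f g" and ex: "execution c E f g S pos"
    and "t \<ge> 0" "w \<in> S" "meets c E f g S pos w t w'"
  obtains i j where "before pos w t i" "before pos w' t j" "pos w' t = j" "{i, j} \<in> E"
    "at_link c i j (sched f g i t)" "at_link c j i (sched f g j t)"
proof -
  obtain i j where ij: "w' \<in> S" "before pos w t i" "before pos w' t j" "{i, j} \<in> E"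
      "at_link c i j (sched f g i t)" "at_link c j i (sched f g j t)"
    using assms(5) unfolding meets_def by blast
  obtain b where b: "\<forall>r\<in>S. before pos r t (b r)"
      and step: "\<forall>r\<in>S. protocol_step c E f g S b t (b r) (pos r t)"
    using ex \<open>t \<ge> 0\<close> unfolding execution_iff by blast
  have "b w = i" "b w' = j" using before_unique b ij \<open>w \<in> S\<close> by blast+
  have "\<not> shift_cond c E f g S b t j k" for k
  proof
    assume "shift_cond c E f g S b t j k"
    then have "{j, k} \<in> E" "at_link c j k (sched f g j t)"
      and blocked: "\<not> (\<exists>r'\<in>S. b r' = k \<and> at_link c k j (sched f g k t))"
      unfolding shift_cond_def by blast+
    moreover have "{j, i} \<in> E" using ij(4) by (simp add: insert_commute)
    ultimately have "i = k" using SCS_at_link_unique[OF scs] ij(6) by blast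
    then show False using blocked \<open>w \<in> S\<close> \<open>b w = i\<close> ij(5) by blast
  qed
  then have "pos w' t = j"
    using step ij(1) \<open>b w' = j\<close> unfolding protocol_step_def by fastforce
  then show ?thesis using that ij by blast
qed

definition pass_baton ::
  "(nat \<Rightarrow> complex) \<Rightarrow> nat set set \<Rightarrow> (nat \<Rightarrow> real) \<Rightarrow> (nat \<Rightarrow> int) \<Rightarrow> nat set
     \<Rightarrow> (nat \<Rightarrow> real \<Rightarrow> nat) \<Rightarrow> nat \<Rightarrow> real \<Rightarrow> nat" where
  "pass_baton c E f g S pos w t =
     (if \<exists>w'. meets c E f g S pos w t w' then SOME w'. meets c E f g S pos w t w' else w)"

lemma pass_baton_meets:
  "\<exists>w'. meets c E f g S pos w t w' \<Longrightarrow> meets c E f g S pos w t (pass_baton c E f g S pos w t)"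
  unfolding pass_baton_def by (simp add: someI_ex)

lemma pass_baton_idle:
  "\<not> (\<exists>w'. meets c E f g S pos w t w') \<Longrightarrow> pass_baton c E f g S pos w t = w"
  unfolding pass_baton_def by (rule if_not_P)

locale baton =
  fixes c :: "nat \<Rightarrow> complex" and n :: nat and eps :: real and E :: "nat set set"
    and f :: "nat \<Rightarrow> real" and g :: "nat \<Rightarrow> int" and S :: "nat set"
    and pos :: "nat \<Rightarrow> real \<Rightarrow> nat" and u :: nat
  assumes scs: "SCS c n eps E f g" and ex: "execution c E f g S pos"
    and u_in: "u \<in> S" and u_not_starving: "\<not> starves c E f g S pos u"
begin

abbreviation starving :: "nat set" where
  "starving \<equiv> {r \<in> S. starves c E f g S pos r}"

definition holder :: "real \<Rightarrow> nat" where
  "holder = run_upto (pass_baton c E f g S pos) u (link_times c E f g)"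

definition holder_before :: "real \<Rightarrow> nat" where
  "holder_before = run_before (pass_baton c E f g S pos) u (link_times c E f g)"

text \<open>The robot of the old execution whose moves \<open>r\<close> retraces just before time \<open>t\<close>.\<close>
definition carrier :: "real \<Rightarrow> nat \<Rightarrow> nat" where
  "carrier t r = (if r = u then holder_before t else r)"

definition baton_pos :: "nat \<Rightarrow> real \<Rightarrow> nat" where
  "baton_pos r t = (if r = u then pos (holder t) t else pos r t)"

lemma locally_finite_links: "locally_finite (link_times c E f g)"
  using SCS_locally_finite_link_times[OF scs] .

lemma holder_not_starving:
  "holder t \<in> S - starving" "holder_before t \<in> S - starving"
proof -
  have "pass_baton c E f g S pos w \<tau> \<in> S - starving" if "w \<in> S - starving" "\<tau> \<ge> 0" for w \<tau>
  proof (cases "\<exists>w'. meets c E f g S pos w \<tau> w'")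
    case True
    then have m: "meets c E f g S pos w \<tau> (pass_baton c E f g S pos w \<tau>)"
      by (rule pass_baton_meets)
    then have "meets c E f g S pos (pass_baton c E f g S pos w \<tau>) \<tau> w"
      using meets_sym that(1) by blast
    then have "\<not> starves c E f g S pos (pass_baton c E f g S pos w \<tau>)"
      using that(2) unfolding starves_iff_no_meets by blast
    moreover have "pass_baton c E f g S pos w \<tau> \<in> S" using m unfolding meets_def by blast
    ultimately show ?thesis by blast
  qed (use that pass_baton_idle in simp)
  moreover have "u \<in> S - starving" using u_in u_not_starving by blast
  ultimately show "holder t \<in> S - starving" "holder_before t \<in> S - starving"
    unfolding holder_def holder_before_def
    using run_invariant[OF locally_finite_links, where P = "\<lambda>w. w \<in> S - starving"]
    by blast+
qed

lemma holder_meets: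
  assumes "t \<ge> 0" "\<exists>w'. meets c E f g S pos (holder_before t) t w'"
  shows "meets c E f g S pos (holder_before t) t (holder t)"
proof -
  have "t \<in> link_times c E f g" using assms(2) meets_link_time by blast
  then have "holder t = pass_baton c E f g S pos (holder_before t) t"
    unfolding holder_def holder_before_def by (rule run_upto_event[OF locally_finite_links _ assms(1)])
  then show ?thesis using pass_baton_meets[OF assms(2)] by simp
qed

lemma holder_idle:
  assumes "t \<ge> 0" "\<not> (\<exists>w'. meets c E f g S pos (holder_before t) t w')"
  shows "holder t = holder_before t"
proof (cases "t \<in> link_times c E f g")
  case True
  then have "holder t = pass_baton c E f g S pos (holder_before t) t"
    unfolding holder_def holder_before_def by (rule run_upto_event[OF locally_finite_links _ assms(1)])
  then show ?thesis using pass_baton_idle[OF assms(2)] by simp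
next
  case False
  then show ?thesis unfolding holder_def holder_before_def by (rule run_upto_not_event)
qed

lemma holder_neg: "t < 0 \<Longrightarrow> holder t = u"
  unfolding holder_def by (rule run_upto_neg)

lemma holder_left_lim: "\<exists>\<delta>>0. \<forall>s. t - \<delta> < s \<and> s < t \<longrightarrow> holder s = holder_before t"
  unfolding holder_def holder_before_def by (rule run_upto_left_lim[OF locally_finite_links])

lemma holder_right_const: "\<exists>\<delta>>0. \<forall>s. t \<le> s \<and> s < t + \<delta> \<longrightarrow> holder s = holder t"
  unfolding holder_def by (rule run_upto_right_const[OF locally_finite_links])

lemma carrier_in: "r \<in> insert u starving \<Longrightarrow> carrier t r \<in> S"
  using holder_not_starving unfolding carrier_def by auto

lemma carrier_starving: "r \<in> starving \<Longrightarrow> carrier t r = r"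
  using u_not_starving unfolding carrier_def by auto

lemma before_baton_pos: "before baton_pos r t p \<longleftrightarrow> before pos (carrier t r) t p"
proof (cases "r = u")
  case True
  obtain d where "d > 0" and d: "\<forall>s. t - d < s \<and> s < t \<longrightarrow> holder s = holder_before t"
    using holder_left_lim by blast
  have "baton_pos r s = pos (carrier t r) s" if "t - d < s \<and> s < t" for s
    using d that True unfolding baton_pos_def carrier_def by simp
  then show ?thesis using \<open>d > 0\<close> by (intro before_cong) blast
next
  case False
  then show ?thesis unfolding before_def baton_pos_def carrier_def by simp
qed

lemma baton_protocol_step:
  assumes "t \<ge> 0" and b: "\<forall>r\<in>S. before pos r t (b r)"
    and step: "\<forall>r\<in>S. protocol_step c E f g S b t (b r) (pos r t)"
    and r: "r \<in> insert u starving"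
  shows "protocol_step c E f g (insert u starving) (b \<circ> carrier t) t (b (carrier t r)) (baton_pos r t)"
proof -
  define w where "w = carrier t r"
  have "w \<in> S" unfolding w_def using carrier_in[OF r] .
  show ?thesis
  proof (cases "\<exists>w'. meets c E f g S pos w t w'")
    case False
    have pos_w: "baton_pos r t = pos w t"
      using holder_idle[OF \<open>t \<ge> 0\<close>] False unfolding baton_pos_def w_def carrier_def by auto
    have occupied: "(b \<circ> carrier t) ` insert u starving \<subseteq> b ` S"
      using carrier_in by (intro image_subsetI) (simp add: imageI)
    have no_meets: "\<forall>w'. \<not> meets c E f g S pos w t w'" using False by blast
    have "protocol_step c E f g S b t (b w) (pos w t)" using step \<open>w \<in> S\<close> by blast
    then have "protocol_step c E f g (insert u starving) (b \<circ> carrier t) t (b w) (pos w t)"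
      by (rule protocol_step_iff_if_no_meets[OF b \<open>w \<in> S\<close> no_meets occupied, THEN iffD2])
    then show ?thesis using pos_w unfolding w_def by simp
  next
    case True
    have "r = u"
    proof (rule ccontr)
      assume "r \<noteq> u"
      then have "r \<in> starving" "w = r" using r unfolding w_def carrier_def by auto
      then show False using True \<open>t \<ge> 0\<close> unfolding starves_iff_no_meets by blast
    qed
    then have w: "w = holder_before t" unfolding w_def carrier_def by simp
    then have "meets c E f g S pos w t (holder t)"
      using holder_meets[OF \<open>t \<ge> 0\<close>] True by simp
    then obtain i j where ij: "before pos w t i" "before pos (holder t) t j" "pos (holder t) t = j"
      "{i, j} \<in> E" "at_link c i j (sched f g i t)" "at_link c j i (sched f g j t)"
      using meets_partner_stays[OF scs ex \<open>t \<ge> 0\<close> \<open>w \<in> S\<close>] by blast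
    have "b w = i" using before_unique b \<open>w \<in> S\<close> ij(1) by blast
    have "i \<noteq> j" using SCS_edgeD(3)[OF scs ij(4)] .
    have "\<not> (b (carrier t r') = j \<and> at_link c j i (sched f g j t))" if "r' \<in> insert u starving" for r'
    proof
      assume r'j: "b (carrier t r') = j \<and> at_link c j i (sched f g j t)"
      have "r' \<noteq> u" using r'j \<open>b w = i\<close> \<open>i \<noteq> j\<close> w unfolding carrier_def by auto
      then have "r' \<in> starving" "carrier t r' = r'" using that unfolding carrier_def by auto
      moreover have "before pos r' t j"
        using r'j b \<open>r' \<in> starving\<close> \<open>carrier t r' = r'\<close> by auto
      then have "meets c E f g S pos r' t w"
        unfolding meets_def using r'j \<open>w \<in> S\<close> ij(1,4,5) by (metis insert_commute)
      ultimately show False using \<open>t \<ge> 0\<close> unfolding starves_iff_no_meets by blast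
    qed
    then have "shift_cond c E f g (insert u starving) (b \<circ> carrier t) t i j"
      unfolding shift_cond_def using ij by auto
    moreover have "b (carrier t r) = i" "baton_pos r t = j"
      using \<open>b w = i\<close> \<open>r = u\<close> ij(3) unfolding w_def baton_pos_def by auto
    ultimately show ?thesis unfolding protocol_step_def by auto
  qed
qed

lemma execution_baton_pos: "execution c E f g (insert u starving) baton_pos"
  unfolding execution_iff
proof (intro conjI ballI allI impI)
  have pos_neg: "\<forall>r\<in>S. \<forall>t<0. pos r t = r"
    and pos_right: "\<forall>r\<in>S. \<forall>t. \<exists>\<delta>>0. \<forall>s. t \<le> s \<and> s < t + \<delta> \<longrightarrow> pos r s = pos r t"
    using ex unfolding execution_iff by blast+
  fix r assume r: "r \<in> insert u starving"
  have r_in: "r \<in> S" if "r \<noteq> u" using r that by blast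
  show "baton_pos r t = r" if "t < 0" for t
  proof (cases "r = u")
    case True
    then show ?thesis using pos_neg u_in holder_neg[OF that] that unfolding baton_pos_def by simp
  next
    case False
    then show ?thesis using pos_neg r_in[OF False] that unfolding baton_pos_def by simp
  qed
  show "\<exists>\<delta>>0. \<forall>s. t \<le> s \<and> s < t + \<delta> \<longrightarrow> baton_pos r s = baton_pos r t" for t
  proof (cases "r = u")
    case True
    obtain d1 where "d1 > 0" and d1: "\<forall>s. t \<le> s \<and> s < t + d1 \<longrightarrow> holder s = holder t"
      using holder_right_const by blast
    have "holder t \<in> S" using holder_not_starving by blast
    then obtain d2 where "d2 > 0"
      and d2: "\<forall>s. t \<le> s \<and> s < t + d2 \<longrightarrow> pos (holder t) s = pos (holder t) t"
      using pos_right by blast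
    have "baton_pos r s = baton_pos r t" if "t \<le> s \<and> s < t + min d1 d2" for s
    proof -
      have "t \<le> s" "s < t + d1" "s < t + d2" using that by auto
      then have "holder s = holder t" "pos (holder t) s = pos (holder t) t"
        using d1 d2 by blast+
      then show ?thesis using True unfolding baton_pos_def by simp
    qed
    moreover have "min d1 d2 > 0" using \<open>d1 > 0\<close> \<open>d2 > 0\<close> by simp
    ultimately show ?thesis by blast
  next
    case False
    then have "baton_pos r = pos r" unfolding baton_pos_def by auto
    then show ?thesis using pos_right r_in[OF False] by (simp only:)
  qed
next
  fix t :: real assume "t \<ge> 0"
  then obtain b where b: "\<forall>r\<in>S. before pos r t (b r)"
    and step: "\<forall>r\<in>S. protocol_step c E f g S b t (b r) (pos r t)"
    using ex unfolding execution_iff by blast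
  have before: "before baton_pos r t ((b \<circ> carrier t) r)" if "r \<in> insert u starving" for r
    using b carrier_in[OF that] unfolding before_baton_pos by simp
  have step': "protocol_step c E f g (insert u starving) (b \<circ> carrier t) t
      ((b \<circ> carrier t) r) (baton_pos r t)" if "r \<in> insert u starving" for r
    using baton_protocol_step[OF \<open>t \<ge> 0\<close> b step that] by simp
  show "\<exists>b. (\<forall>r\<in>insert u starving. before baton_pos r t (b r)) \<and>
      (\<forall>r\<in>insert u starving. protocol_step c E f g (insert u starving) b t (b r) (baton_pos r t))"
    by (intro exI[of _ "b \<circ> carrier t"] conjI ballI before step')
qed

lemma meets_baton_pos:
  assumes "meets c E f g (insert u starving) baton_pos r t w'"
  shows "meets c E f g S pos (carrier t r) t (carrier t w')"
proof -
  obtain i j where "w' \<in> insert u starving" "before baton_pos r t i" "before baton_pos w' t j"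
    "{i, j} \<in> E" "at_link c i j (sched f g i t)" "at_link c j i (sched f g j t)"
    using assms unfolding meets_def by blast
  then show ?thesis
    using carrier_in unfolding meets_def before_baton_pos by blast
qed

lemma starves_baton_pos:
  assumes "r \<in> insert u starving"
  shows "starves c E f g (insert u starving) baton_pos r"
  unfolding starves_iff_no_meets[where S = "insert u starving"]
proof (intro allI impI notI)
  fix t w' assume "t \<ge> (0::real)" and m: "meets c E f g (insert u starving) baton_pos r t w'"
  have m': "meets c E f g S pos (carrier t r) t (carrier t w')"
    using m by (rule meets_baton_pos)
  have "w' \<in> insert u starving" using m unfolding meets_def by blast
  consider "r \<in> starving" | "w' \<in> starving" | "r = u" "w' = u"
    using assms \<open>w' \<in> insert u starving\<close> by blast
  then show False
  proof cases
    case 1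
    then have "meets c E f g S pos r t (carrier t w')" "starves c E f g S pos r"
      using m' carrier_starving by auto
    then show False using \<open>t \<ge> 0\<close> unfolding starves_iff_no_meets by blast
  next
    case 2
    then have "meets c E f g S pos w' t (carrier t r)" "starves c E f g S pos w'"
      using meets_sym[OF m' carrier_in[OF assms]] carrier_starving by auto
    then show False using \<open>t \<ge> 0\<close> unfolding starves_iff_no_meets by blast
  next
    case 3
    then show False using m' meets_irrefl[OF scs] by simp
  qed
qed

end

lemma execution_add_starving:
  assumes "SCS c n eps E f g" "execution c E f g S pos" "u \<in> S" "\<not> starves c E f g S pos u"
  defines "Y \<equiv> insert u {r \<in> S. starves c E f g S pos r}"
  shows "\<exists>pos'. execution c E f g Y pos' \<and> (\<forall>r\<in>Y. starves c E f g Y pos' r)"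
proof -
  interpret baton c n eps E f g S pos u using assms by unfold_locales
  show ?thesis unfolding Y_def using execution_baton_pos starves_baton_pos by blast
qed

section \<open>Starving counts\<close>

lemma starving_counts_le:
  assumes "m \<in> starving_counts c n E f g R"
  shows "m \<le> card ({..<n} - R)"
  using assms unfolding starving_counts_def by (auto intro: card_mono)

lemma card_mem_starving_counts:
  assumes "X \<subseteq> {..<n}" "execution c E f g X pos" "\<forall>r\<in>X. starves c E f g X pos r"
  shows "card X \<in> starving_counts c n E f g ({..<n} - X)"
proof -
  have D: "{..<n} - ({..<n} - X) = X" using assms(1) by blast
  have "{r \<in> X. starves c E f g X pos r} = X" using assms(3) by blast
  then have "card X = card {r \<in> X. starves c E f g X pos r}" by simp
  then show ?thesis unfolding starving_counts_def D using assms(2) by blast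
qed

lemma starving_count_all_survivors_starve:
  assumes "m \<in> starving_counts c n E f g R"
  obtains X where "X \<subseteq> {..<n}" "card X = m" "m \<in> starving_counts c n E f g ({..<n} - X)"
proof -
  obtain pos where ex: "execution c E f g ({..<n} - R) pos"
    and m: "m = card {r \<in> {..<n} - R. starves c E f g ({..<n} - R) pos r}"
    using assms unfolding starving_counts_def by blast
  define X where "X = {r \<in> {..<n} - R. starves c E f g ({..<n} - R) pos r}"
  have "X \<subseteq> {..<n} - R" "\<forall>r\<in>X. starves c E f g ({..<n} - R) pos r" unfolding X_def by auto
  then have "execution c E f g X pos" "\<forall>r\<in>X. starves c E f g X pos r"
    by (rule execution_restrict_starving[OF ex])+
  moreover have "X \<subseteq> {..<n}" unfolding X_def by blast
  ultimately have "card X \<in> starving_counts c n E f g ({..<n} - X)"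
    by (intro card_mem_starving_counts)
  moreover have "card X = m" using m unfolding X_def by simp
  ultimately show ?thesis using that \<open>X \<subseteq> {..<n}\<close> by simp
qed

lemma starving_counts_Suc:
  assumes "SCS c n eps E f g" "m \<in> starving_counts c n E f g R" "m < card ({..<n} - R)"
  shows "\<exists>R'\<subseteq>{..<n}. Suc m \<in> starving_counts c n E f g R'"
proof -
  define S where "S = {..<n} - R"
  obtain pos where ex: "execution c E f g S pos"
    and m: "m = card {r \<in> S. starves c E f g S pos r}"
    using assms(2) unfolding starving_counts_def S_def by blast
  define X where "X = {r \<in> S. starves c E f g S pos r}"
  have "card X = m" using m unfolding X_def by simp
  have "X \<subseteq> S" unfolding X_def by blast
  moreover have "X \<noteq> S" using assms(3) \<open>card X = m\<close> unfolding S_def by auto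
  ultimately have "X \<subset> S" by blast
  then obtain u where "u \<in> S" "u \<notin> X" by blast
  then have "\<not> starves c E f g S pos u" unfolding X_def by blast
  then obtain pos' where "execution c E f g (insert u X) pos'"
    "\<forall>r\<in>insert u X. starves c E f g (insert u X) pos' r"
    using execution_add_starving[OF assms(1) ex \<open>u \<in> S\<close>, folded X_def] by blast
  moreover have "insert u X \<subseteq> {..<n}" using \<open>X \<subset> S\<close> \<open>u \<in> S\<close> unfolding S_def by blast
  moreover have "card (insert u X) = Suc m"
    using \<open>u \<notin> X\<close> \<open>card X = m\<close> finite_subset[OF \<open>insert u X \<subseteq> {..<n}\<close>] by simp
  ultimately have "card (insert u X) \<in> starving_counts c n E f g ({..<n} - insert u X)"
    by (intro card_mem_starving_counts)
  then show ?thesis using \<open>card (insert u X) = Suc m\<close> by (intro exI[of _ "{..<n} - insert u X"]) auto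
qed

lemma finite_starving_counts_Union: "finite (\<Union>R\<in>Pow {..<n}. starving_counts c n E f g R)"
proof (rule finite_subset)
  show "(\<Union>R\<in>Pow {..<n}. starving_counts c n E f g R) \<subseteq> {..n}"
  proof (intro subsetI, elim UN_E)
    fix m R assume "m \<in> starving_counts c n E f g R"
    then have "m \<le> card ({..<n} - R)" by (rule starving_counts_le)
    also have "\<dots> \<le> n" using card_mono[of "{..<n}" "{..<n} - R"] by simp
    finally show "m \<in> {..n}" by simp
  qed
qed simp

lemma starving_counts_le_starvation_number:
  "R \<subseteq> {..<n} \<Longrightarrow> m \<in> starving_counts c n E f g R \<Longrightarrow> m \<le> starvation_number c n E f g"
  unfolding starvation_number_def using finite_starving_counts_Union by (intro Max_ge) auto

lemma starvation_number_mem: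
  obtains R where "starvation_number c n E f g \<in> starving_counts c n E f g R"
proof -
  have "0 \<in> starving_counts c n E f g {..<n}"
    unfolding starving_counts_def execution_def by simp
  then have "(\<Union>R\<in>Pow {..<n}. starving_counts c n E f g R) \<noteq> {}" by blast
  then show ?thesis
    using that Max_in[OF finite_starving_counts_Union] unfolding starvation_number_def by blast
qed

lemma resilience_le:
  assumes "m \<in> starving_counts c n E f g R"
  shows "resilience c n E f g m \<le> enat (n - m)"
proof -
  obtain X where "X \<subseteq> {..<n}" "card X = m" "m \<in> starving_counts c n E f g ({..<n} - X)"
    using starving_count_all_survivors_starve[OF assms] by blast
  moreover have "card ({..<n} - X) = n - m"
    using \<open>X \<subseteq> {..<n}\<close> \<open>card X = m\<close> finite_subset[OF \<open>X \<subseteq> {..<n}\<close>] by (simp add: card_Diff_subset)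
  ultimately show ?thesis
    unfolding resilience_def by (intro Inf_lower CollectI exI[of _ "{..<n} - X"]) auto
qed

lemma resilience_starvation_number_ge:
  assumes scs: "SCS c n eps E f g"
  defines "s \<equiv> starvation_number c n E f g"
  shows "enat (n - s) \<le> resilience c n E f g s"
  unfolding resilience_def
proof (intro Inf_greatest, elim CollectE exE conjE bexE)
  fix a R m
  assume a: "a = enat (card R)" and R: "R \<subseteq> {..<n}"
    and m: "m \<in> starving_counts c n E f g R" and "s \<le> m"
  have "m = s" using starving_counts_le_starvation_number[OF R m] \<open>s \<le> m\<close> unfolding s_def by simp
  have "\<not> s < card ({..<n} - R)"
  proof
    assume "s < card ({..<n} - R)"
    then obtain R' where "R' \<subseteq> {..<n}" "Suc s \<in> starving_counts c n E f g R'"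
      using starving_counts_Suc[OF scs m] \<open>m = s\<close> by auto
    then have "Suc s \<le> s" unfolding s_def by (rule starving_counts_le_starvation_number)
    then show False by simp
  qed
  moreover have "card ({..<n} - R) = n - card R"
    using R finite_subset[OF R] by (simp add: card_Diff_subset)
  ultimately show "enat (n - s) \<le> a" using a by simp
qed

theorem lemma3:
  fixes c :: "nat \<Rightarrow> complex" and n :: nat and eps :: real and E :: "nat set set"
    and f :: "nat \<Rightarrow> real" and g :: "nat \<Rightarrow> int" and s :: nat
  assumes "SCS c n eps E f g"
    and "starvation_number c n E f g = s"
  shows "resilience c n E f g s = enat (n - s)"
proof (rule antisym)
  obtain R where "s \<in> starving_counts c n E f g R"
    using starvation_number_mem assms(2) by metis
  then show "resilience c n E f g s \<le> enat (n - s)" by (rule resilience_le)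
  show "enat (n - s) \<le> resilience c n E f g s"
    using resilience_starvation_number_ge[OF assms(1)] assms(2) by simp
qed

end
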